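(* Let $\mathcal{A}_q$ be a contractive Banach $q$-plane generated by $x,y$. The following are equivalent: (i) $\mathcal{I}_{xy}\subseteq\operatorname{Rad}\mathcal{A}_q$; (ii) $\operatorname{Rad}\mathcal{A}_q=Q(\mathcal{A}_q)$; (iii) $\mathcal{A}_q/\operatorname{Rad}\mathcal{A}_q$ is commutative.
   Context: Fix $q\in\mathbb{C}$ with $0<|q|<1$. A contractive Banach $q$-plane is a unital Banach algebra $\mathcal{A}_q$ containing elements $x,y$ with $xy=q^{-1}yx$ such that the unital subalgebra $A_q$ generated by $x,y$ is dense. $\mathcal{I}_{xy}$ is the norm closure in $\mathcal{A}_q$ of the two-sided ideal of $A_q$ generated by $xy$. $\operatorname{Rad}$ denotes the Jacobson radical and $Q(\mathcal{A}_q)$ the set of quasinilpotent elements (elements with spectrum $\{0\}$). *)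

theory Defs
  imports "HOL-Analysis.Analysis"
begin

text \<open>The library has no complex normed vector spaces; we add complex scalar
multiplication on top of a real unital Banach algebra (norm 1 = 1, submultiplicative
norm, complete), compatible with the real structure and the multiplication.\<close>

class complex_banach_algebra_1 = real_normed_algebra_1 + banach +
  fixes scaleC :: "complex \<Rightarrow> 'a \<Rightarrow> 'a"
  assumes scaleC_add_right: "scaleC c (a + b) = scaleC c a + scaleC c b"
    and scaleC_add_left: "scaleC (c + d) a = scaleC c a + scaleC d a"
    and scaleC_scaleC: "scaleC c (scaleC d a) = scaleC (c * d) a"
    and scaleC_one: "scaleC 1 a = a"
    and scaleC_of_real: "scaleC (complex_of_real r) a = scaleR r a"
    and norm_scaleC: "norm (scaleC c a) = cmod c * norm a"
    and mult_scaleC_left: "scaleC c a * b = scaleC c (a * b)"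
    and mult_scaleC_right: "a * scaleC c b = scaleC c (a * b)"

definition invertible_el :: "'a::ring_1 \<Rightarrow> bool" where
  "invertible_el a \<longleftrightarrow> (\<exists>b. a * b = 1 \<and> b * a = 1)"

definition spectrum_el :: "'a::complex_banach_algebra_1 \<Rightarrow> complex set" where
  "spectrum_el a = {z. \<not> invertible_el (scaleC z 1 - a)}"

definition quasinilpotents :: "'a::complex_banach_algebra_1 set" where
  "quasinilpotents = {a. spectrum_el a = {0}}"

definition left_ideal :: "'a::complex_banach_algebra_1 set \<Rightarrow> bool" where
  "left_ideal L \<longleftrightarrow> 0 \<in> L \<and> (\<forall>a\<in>L. \<forall>b\<in>L. a + b \<in> L)
     \<and> (\<forall>c. \<forall>a\<in>L. scaleC c a \<in> L) \<and> (\<forall>r. \<forall>a\<in>L. r * a \<in> L)"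

definition maximal_left_ideal :: "'a::complex_banach_algebra_1 set \<Rightarrow> bool" where
  "maximal_left_ideal L \<longleftrightarrow> left_ideal L \<and> L \<noteq> UNIV \<and>
     (\<forall>M. left_ideal M \<and> L \<subseteq> M \<and> M \<noteq> UNIV \<longrightarrow> M = L)"

definition jacobson_radical :: "'a::complex_banach_algebra_1 set" where
  "jacobson_radical = \<Inter> {L. maximal_left_ideal L}"

inductive_set subalg_gen :: "'a::complex_banach_algebra_1 \<Rightarrow> 'a \<Rightarrow> 'a set"
  for x y :: 'a where
    one: "1 \<in> subalg_gen x y"
  | gen_x: "x \<in> subalg_gen x y"
  | gen_y: "y \<in> subalg_gen x y"
  | add: "a \<in> subalg_gen x y \<Longrightarrow> b \<in> subalg_gen x y \<Longrightarrow> a + b \<in> subalg_gen x y"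
  | scale: "a \<in> subalg_gen x y \<Longrightarrow> scaleC c a \<in> subalg_gen x y"
  | mult: "a \<in> subalg_gen x y \<Longrightarrow> b \<in> subalg_gen x y \<Longrightarrow> a * b \<in> subalg_gen x y"

inductive_set ideal_gen :: "'a::complex_banach_algebra_1 set \<Rightarrow> 'a \<Rightarrow> 'a set"
  for S :: "'a set" and z :: 'a where
    gen: "z \<in> ideal_gen S z"
  | zero: "0 \<in> ideal_gen S z"
  | add: "a \<in> ideal_gen S z \<Longrightarrow> b \<in> ideal_gen S z \<Longrightarrow> a + b \<in> ideal_gen S z"
  | scale: "a \<in> ideal_gen S z \<Longrightarrow> scaleC c a \<in> ideal_gen S z"
  | mult_left: "s \<in> S \<Longrightarrow> a \<in> ideal_gen S z \<Longrightarrow> s * a \<in> ideal_gen S z"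
  | mult_right: "s \<in> S \<Longrightarrow> a \<in> ideal_gen S z \<Longrightarrow> a * s \<in> ideal_gen S z"

definition banach_q_plane :: "complex \<Rightarrow> 'a::complex_banach_algebra_1 \<Rightarrow> 'a \<Rightarrow> bool" where
  "banach_q_plane q x y \<longleftrightarrow> x * y = scaleC (inverse q) (y * x)
     \<and> closure (subalg_gen x y) = UNIV"

definition I_xy :: "'a::complex_banach_algebra_1 \<Rightarrow> 'a \<Rightarrow> 'a set" where
  "I_xy x y = closure (ideal_gen (subalg_gen x y) (x * y))"

end

theory Submission
  imports Defs
begin

text \<open>
  The relation \<open>y x = q x y\<close> gives \<open>(x y)\<^sup>n = q\<^sup>n\<^sup>(\<^sup>n\<^sup>-\<^sup>1\<^sup>)\<^sup>/\<^sup>2 x\<^sup>n y\<^sup>n\<close>, so \<open>x y\<close> is quasinilpotent,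
  and \<open>x y - y x = (1 - q) x y\<close> puts every commutator of the dense subalgebra \<open>A\<^sub>q\<close> into the
  ideal generated by \<open>x y\<close>. Since the radical is a closed two-sided ideal consisting of
  quasinilpotents, (ii) gives (i), and (i) gives (iii) by density and continuity of commutators.
  For (iii) \<open>\<Rightarrow>\<close> (ii): if \<open>a\<close> is quasinilpotent then \<open>\<parallel>a\<^sup>n\<parallel>\<close> decays faster than any geometric
  sequence (Rickart's elementary argument, averaging the resolvent over roots of unity), so
  \<open>c = \<Sum>\<^sub>n b\<^sup>n a\<^sup>n\<close> converges and, modulo commutators, \<open>c (1 - b a) = 1\<close>; hence \<open>1 - b a\<close> is left
  invertible for all \<open>b\<close>, i.e. \<open>a\<close> lies in the radical.
\<close>

interpretation scaleC: vector_space "scaleC :: complex \<Rightarrow> 'a::complex_banach_algebra_1 \<Rightarrow> 'a"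
  by unfold_locales (auto simp: scaleC_add_right scaleC_add_left scaleC_scaleC scaleC_one)

lemma scaleC_scaleR_commute:
  "scaleC c (scaleR r a) = scaleR r (scaleC c (a::'a::complex_banach_algebra_1))"
  by (metis scaleC_of_real scaleC_scaleC mult.commute)

lemma bounded_linear_scaleC_right: "bounded_linear (scaleC c :: 'a::complex_banach_algebra_1 \<Rightarrow> 'a)"
  by (rule bounded_linear_intro[where K="cmod c"])
     (auto simp: scaleC_add_right scaleC_scaleR_commute norm_scaleC mult.commute)

lemma bounded_linear_scaleC_left:
  "bounded_linear (\<lambda>c. scaleC c (a::'a::complex_banach_algebra_1))"
proof (rule bounded_linear_intro[where K="norm a"])
  show "scaleC (scaleR r c) a = scaleR r (scaleC c a)" for r c
    by (metis scaleC_of_real scaleC_scaleC scaleR_conv_of_real)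
qed (auto simp: scaleC_add_left norm_scaleC)

lemma scaleC_mult_scaleC:
  "scaleC c a * scaleC d b = scaleC (c * d) ((a::'a::complex_banach_algebra_1) * b)"
  by (simp add: mult_scaleC_left mult_scaleC_right scaleC_scaleC)

lemma scaleC_power: "(scaleC c a) ^ n = scaleC (c ^ n) ((a::'a::complex_banach_algebra_1) ^ n)"
  by (induction n) (auto simp: scaleC_mult_scaleC mult.commute)

lemma norm_scaleC_power: "norm ((scaleC c a) ^ n) = cmod c ^ n * norm ((a::'a::complex_banach_algebra_1) ^ n)"
  by (simp add: scaleC_power norm_scaleC norm_power)

section \<open>Invertible elements and the Neumann series\<close>

definition inv_el :: "'a::ring_1 \<Rightarrow> 'a" where
  "inv_el a = (SOME b. a * b = 1 \<and> b * a = 1)"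

lemma invertible_elI: "a * b = 1 \<Longrightarrow> b * a = 1 \<Longrightarrow> invertible_el a"
  unfolding invertible_el_def by blast

lemma
  assumes "invertible_el a"
  shows mult_inv_el: "a * inv_el a = 1" and inv_el_mult: "inv_el a * a = 1"
  using someI_ex[OF assms[unfolded invertible_el_def]] by (auto simp: inv_el_def)

lemma inv_el_eqI:
  assumes "a * b = 1" "b * a = (1::'a::ring_1)" shows "inv_el a = b"
proof -
  have "invertible_el a" using assms by (rule invertible_elI)
  then have "inv_el a = (inv_el a * a) * b" by (simp add: mult.assoc assms(1))
  then show ?thesis by (simp add: inv_el_mult \<open>invertible_el a\<close>)
qed

lemma invertible_el_one: "invertible_el (1::'a::ring_1)"
  by (rule invertible_elI[of _ 1]) auto

lemma invertible_el_minus_iff: "invertible_el (- a) \<longleftrightarrow> invertible_el (a::'a::ring_1)"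
  unfolding invertible_el_def by (metis minus_minus mult_minus_left mult_minus_right)

lemma power_mult_power_eq_one: "a * b = 1 \<Longrightarrow> a ^ n * b ^ n = (1::'a::monoid_mult)"
proof (induction n)
  case (Suc n)
  have "a ^ Suc n * b ^ Suc n = a ^ n * (a * b) * b ^ n"
    by (simp only: power_Suc2[of a] power_Suc[of b] mult.assoc)
  with Suc show ?case by simp
qed simp

lemma invertible_el_scaleC:
  assumes "invertible_el (a::'a::complex_banach_algebra_1)" "c \<noteq> 0"
  shows "invertible_el (scaleC c a)"
  using assms
  by (intro invertible_elI[of _ "scaleC (inverse c) (inv_el a)"])
     (auto simp: scaleC_mult_scaleC mult_inv_el inv_el_mult)

lemma invertible_el_scaleC_iff:
  "c \<noteq> 0 \<Longrightarrow> invertible_el (scaleC c a) \<longleftrightarrow> invertible_el (a::'a::complex_banach_algebra_1)"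
  using invertible_el_scaleC[of "scaleC c a" "inverse c"] invertible_el_scaleC[of a c]
  by (auto simp: scaleC_scaleC)

lemma invertible_el_one_minus_commute:
  assumes "invertible_el (1 - b * a)" shows "invertible_el (1 - a * (b::'a::ring_1))"
proof -
  let ?u = "inv_el (1 - b * a)"
  have "(1 - a * b) * (1 + a * ?u * b) = 1 + a * ((1 - b * a) * ?u - 1) * b"
    and "(1 + a * ?u * b) * (1 - a * b) = 1 + a * (?u * (1 - b * a) - 1) * b"
    by (simp_all add: algebra_simps)
  then show ?thesis
    using assms by (intro invertible_elI[of _ "1 + a * ?u * b"]) (simp_all add: mult_inv_el inv_el_mult)
qed

lemma one_minus_mult_geometric_sum:
  "(1 - c) * (\<Sum>k<n. c ^ k) = 1 - (c::'a::ring_1) ^ n"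
  "(\<Sum>k<n. c ^ k) * (1 - c) = 1 - c ^ n"
proof (induction n)
  case (Suc n)
  have "(1 - c) * c ^ n = c ^ n - c ^ Suc n" "c ^ n * (1 - c) = c ^ n - c ^ Suc n"
    by (simp_all add: algebra_simps power_commutes)
  with Suc show "(1 - c) * (\<Sum>k<Suc n. c ^ k) = 1 - c ^ Suc n"
    "(\<Sum>k<Suc n. c ^ k) * (1 - c) = 1 - c ^ Suc n"
    by (simp_all add: distrib_left distrib_right)
qed simp_all

lemma neumann_series:
  fixes c :: "'a::complex_banach_algebra_1"
  assumes "summable (\<lambda>n. norm (c ^ n))"
  shows "invertible_el (1 - c)" and "inv_el (1 - c) = (\<Sum>n. c ^ n)"
proof -
  have s: "summable (\<lambda>n. c ^ n)" using assms by (rule summable_norm_cancel)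
  have partial: "(\<lambda>n. \<Sum>k<n. c ^ k) \<longlonglongrightarrow> (\<Sum>n. c ^ n)"
    using s by (simp add: summable_LIMSEQ)
  have "(\<lambda>n. 1 - c ^ n) \<longlonglongrightarrow> 1 - 0"
    by (intro tendsto_diff tendsto_const summable_LIMSEQ_zero[OF s])
  then have "(\<lambda>n. (1 - c) * (\<Sum>k<n. c ^ k)) \<longlonglongrightarrow> 1"
    and "(\<lambda>n. (\<Sum>k<n. c ^ k) * (1 - c)) \<longlonglongrightarrow> 1"
    by (simp_all add: one_minus_mult_geometric_sum)
  moreover have "(\<lambda>n. (1 - c) * (\<Sum>k<n. c ^ k)) \<longlonglongrightarrow> (1 - c) * (\<Sum>n. c ^ n)"
    and "(\<lambda>n. (\<Sum>k<n. c ^ k) * (1 - c)) \<longlonglongrightarrow> (\<Sum>n. c ^ n) * (1 - c)"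
    by (intro tendsto_mult tendsto_const partial)+
  ultimately have "(1 - c) * (\<Sum>n. c ^ n) = 1" "(\<Sum>n. c ^ n) * (1 - c) = 1"
    using LIMSEQ_unique by blast+
  then show "invertible_el (1 - c)" "inv_el (1 - c) = (\<Sum>n. c ^ n)"
    by (simp_all add: invertible_elI inv_el_eqI)
qed

lemma invertible_el_one_minus_small:
  fixes z :: "'a::complex_banach_algebra_1"
  assumes "norm z \<le> 1/2"
  shows "invertible_el (1 - z)" and "norm (inv_el (1 - z) - 1) \<le> 2 * norm z"
proof -
  have g: "summable (\<lambda>n. norm z ^ n)" using assms by (intro summable_geometric) simp
  have le: "norm (z ^ n) \<le> norm z ^ n" for n by (rule norm_power_ineq)
  have sn: "summable (\<lambda>n. norm (z ^ n))"
    by (rule summable_comparison_test[OF _ g]) (auto simp: le)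
  show inv: "invertible_el (1 - z)" using neumann_series(1)[OF sn] .
  have "norm (inv_el (1 - z)) \<le> (\<Sum>n. norm (z ^ n))"
    unfolding neumann_series(2)[OF sn] by (rule summable_norm[OF sn])
  also have "\<dots> \<le> (\<Sum>n. norm z ^ n)" by (rule suminf_le[OF le sn g])
  also have "\<dots> = 1 / (1 - norm z)" using assms by (intro suminf_geometric) simp
  also have "\<dots> \<le> 2" using assms by (simp add: field_simps)
  finally have bound: "norm (inv_el (1 - z)) \<le> 2" .
  have "inv_el (1 - z) - 1 = z * inv_el (1 - z)"
    using mult_inv_el[OF inv] by (simp add: algebra_simps)
  then have "norm (inv_el (1 - z) - 1) \<le> norm z * norm (inv_el (1 - z))"
    by (simp add: norm_mult_ineq)
  also have "\<dots> \<le> norm z * 2" using bound by (simp add: mult_left_mono)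
  finally show "norm (inv_el (1 - z) - 1) \<le> 2 * norm z" by simp
qed

lemma invertible_el_perturbation:
  fixes u w :: "'a::complex_banach_algebra_1"
  assumes u: "invertible_el u" and small: "norm (inv_el u) * norm (w - u) \<le> 1/2"
  shows "invertible_el w"
    and "norm (inv_el w - inv_el u) \<le> 2 * norm (inv_el u) ^ 2 * norm (w - u)"
proof -
  let ?v = "inv_el u"
  define z where "z = ?v * (u - w)"
  have nz: "norm z \<le> norm ?v * norm (w - u)"
    using norm_mult_ineq[of ?v "u - w"] by (simp add: z_def norm_minus_commute)
  then have "norm z \<le> 1/2" using small by linarith
  note inv_z = invertible_el_one_minus_small[OF this]
  have w_eq: "w = u * (1 - z)"
    by (simp add: z_def right_diff_distrib mult.assoc[symmetric] mult_inv_el[OF u])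
  let ?W = "inv_el (1 - z) * ?v"
  have "w * ?W = u * ((1 - z) * inv_el (1 - z)) * ?v" by (simp add: w_eq mult.assoc)
  then have wW: "w * ?W = 1" by (simp add: mult_inv_el[OF inv_z(1)] mult_inv_el[OF u])
  have "?W * w = inv_el (1 - z) * ((?v * u) * (1 - z))" by (simp add: w_eq mult.assoc)
  then have Ww: "?W * w = 1" by (simp add: inv_el_mult[OF inv_z(1)] inv_el_mult[OF u])
  show "invertible_el w" using wW Ww by (rule invertible_elI)
  have "inv_el w - ?v = (inv_el (1 - z) - 1) * ?v"
    by (simp add: inv_el_eqI[OF wW Ww] algebra_simps)
  then have "norm (inv_el w - ?v) \<le> norm (inv_el (1 - z) - 1) * norm ?v"
    by (simp add: norm_mult_ineq)
  also have "\<dots> \<le> 2 * (norm ?v * norm (w - u)) * norm ?v"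
    using inv_z(2) nz by (intro mult_right_mono) auto
  finally show "norm (inv_el w - ?v) \<le> 2 * norm ?v ^ 2 * norm (w - u)"
    by (simp add: power2_eq_square mult_ac)
qed

lemma tendsto_inv_el:
  fixes f :: "'b \<Rightarrow> 'a::complex_banach_algebra_1"
  assumes f: "(f \<longlongrightarrow> u) F" and u: "invertible_el u"
  shows "((\<lambda>t. inv_el (f t)) \<longlongrightarrow> inv_el u) F"
proof -
  let ?v = "inv_el u"
  have dist0: "((\<lambda>t. norm (f t - u)) \<longlongrightarrow> 0) F"
    using f by (simp add: tendsto_norm_zero_iff LIM_zero_iff)
  have "((\<lambda>t. norm ?v * norm (f t - u)) \<longlongrightarrow> norm ?v * 0) F"
    by (intro tendsto_mult tendsto_const dist0)
  then have "eventually (\<lambda>t. norm ?v * norm (f t - u) < 1/2) F"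
    by (rule order_tendstoD(2)) simp
  then have bound: "eventually (\<lambda>t. norm (inv_el (f t) - ?v) \<le> 2 * norm ?v ^ 2 * norm (f t - u)) F"
    by (rule eventually_mono) (simp add: invertible_el_perturbation(2)[OF u])
  have "((\<lambda>t. 2 * norm ?v ^ 2 * norm (f t - u)) \<longlongrightarrow> 2 * norm ?v ^ 2 * 0) F"
    by (intro tendsto_mult tendsto_const dist0)
  then have "((\<lambda>t. inv_el (f t) - ?v) \<longlongrightarrow> 0) F"
    using Lim_null_comparison[OF bound] by simp
  then show ?thesis by (simp add: LIM_zero_iff)
qed

section \<open>Left ideals and the Jacobson radical\<close>

context
  fixes L :: "'a::complex_banach_algebra_1 set"
  assumes L: "left_ideal L"
begin

lemma left_ideal_zero: "0 \<in> L"
  and left_ideal_add: "a \<in> L \<Longrightarrow> b \<in> L \<Longrightarrow> a + b \<in> L"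
  and left_ideal_scaleC: "a \<in> L \<Longrightarrow> scaleC c a \<in> L"
  and left_ideal_mult: "a \<in> L \<Longrightarrow> r * a \<in> L"
  using L unfolding left_ideal_def by auto

lemma left_ideal_minus: "a \<in> L \<Longrightarrow> - a \<in> L"
  using left_ideal_mult[of a "- 1"] by simp

lemma left_ideal_sum: "(\<And>i. i \<in> S \<Longrightarrow> f i \<in> L) \<Longrightarrow> sum f S \<in> L"
  by (induction S rule: infinite_finite_induct) (auto intro: left_ideal_zero left_ideal_add)

lemma left_ideal_eq_UNIV_iff: "L = UNIV \<longleftrightarrow> 1 \<in> L"
  using left_ideal_mult[of 1] by force

lemma closure_left_ideal: "left_ideal (closure L)"
  unfolding left_ideal_def
proof (intro conjI ballI allI)
  show "0 \<in> closure L" using left_ideal_zero closure_subset by blast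
next
  fix a b assume "a \<in> closure L" "b \<in> closure L"
  then obtain s t where "\<forall>n. s n \<in> L" "s \<longlonglongrightarrow> a" "\<forall>n. t n \<in> L" "t \<longlonglongrightarrow> b"
    unfolding closure_sequential by blast
  then show "a + b \<in> closure L"
    unfolding closure_sequential by (intro exI[of _ "\<lambda>n. s n + t n"]) (auto intro: left_ideal_add tendsto_add)
next
  fix c :: complex and a assume "a \<in> closure L"
  then obtain s where "\<forall>n. s n \<in> L" "s \<longlonglongrightarrow> a" unfolding closure_sequential by blast
  then show "scaleC c a \<in> closure L"
    unfolding closure_sequential
    by (intro exI[of _ "\<lambda>n. scaleC c (s n)"])
       (auto intro: left_ideal_scaleC bounded_linear.tendsto[OF bounded_linear_scaleC_right])
next
  fix r a assume "a \<in> closure L"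
  then obtain s where "\<forall>n. s n \<in> L" "s \<longlonglongrightarrow> a" unfolding closure_sequential by blast
  then show "r * a \<in> closure L"
    unfolding closure_sequential by (intro exI[of _ "\<lambda>n. r * s n"]) (auto intro: left_ideal_mult tendsto_mult)
qed

lemma one_notin_closure_left_ideal:
  assumes "L \<noteq> UNIV" shows "1 \<notin> closure L"
proof
  assume "1 \<in> closure L"
  then obtain l where l: "l \<in> L" "dist l 1 < 1/2"
    unfolding closure_approachable by (metis divide_pos_pos zero_less_numeral zero_less_one)
  then have "norm (1 - l) \<le> 1/2" by (simp add: dist_norm norm_minus_commute)
  then have "invertible_el l" using invertible_el_one_minus_small(1) by fastforce
  then have "1 \<in> L" using left_ideal_mult[OF l(1), of "inv_el l"] by (simp add: inv_el_mult)
  then show False using assms left_ideal_eq_UNIV_iff by simp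
qed

end

lemma left_ideal_Inter: "(\<And>L. L \<in> F \<Longrightarrow> left_ideal L) \<Longrightarrow> left_ideal (\<Inter> F)"
  unfolding left_ideal_def by auto

lemma left_ideal_Union_chain:
  assumes "F \<noteq> {}" "\<And>L. L \<in> F \<Longrightarrow> left_ideal L" "\<And>L M. L \<in> F \<Longrightarrow> M \<in> F \<Longrightarrow> L \<subseteq> M \<or> M \<subseteq> L"
  shows "left_ideal (\<Union> F)"
  unfolding left_ideal_def
proof (intro conjI ballI allI)
  fix a b assume "a \<in> \<Union>F" "b \<in> \<Union>F"
  then obtain L where "L \<in> F" "a \<in> L" "b \<in> L" using assms(3) by blast
  then show "a + b \<in> \<Union>F" using assms(2) left_ideal_add by blast
next
  show "0 \<in> \<Union>F" using assms(1,2) left_ideal_zero by blast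
qed (use assms(2) left_ideal_scaleC left_ideal_mult in blast)+

lemma maximal_left_ideal_closed:
  fixes L :: "'a::complex_banach_algebra_1 set"
  assumes "maximal_left_ideal L" shows "closed L"
proof -
  have L: "left_ideal L" "L \<noteq> UNIV" using assms unfolding maximal_left_ideal_def by auto
  have "closure L \<noteq> UNIV" using one_notin_closure_left_ideal[OF L] by auto
  then have "closure L = L"
    using assms closure_left_ideal[OF L(1)] closure_subset unfolding maximal_left_ideal_def by blast
  then show ?thesis by (metis closed_closure)
qed

lemma exists_maximal_left_ideal:
  fixes J :: "'a::complex_banach_algebra_1 set"
  assumes J: "left_ideal J" and "1 \<notin> J"
  shows "\<exists>L. maximal_left_ideal L \<and> J \<subseteq> L"
proof -
  let ?A = "{M. left_ideal M \<and> J \<subseteq> M \<and> 1 \<notin> M}"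
  have "\<exists>M\<in>?A. \<forall>X\<in>?A. M \<subseteq> X \<longrightarrow> X = M"
  proof (rule subset_Zorn_nonempty)
    fix C assume "C \<noteq> {}" "subset.chain ?A C"
    then show "\<Union>C \<in> ?A"
      using left_ideal_Union_chain[of C] unfolding subset_chain_def by blast
  qed (use assms in blast)
  then obtain L where L: "L \<in> ?A" and max: "\<forall>X\<in>?A. L \<subseteq> X \<longrightarrow> X = L" by blast
  have "maximal_left_ideal L"
    unfolding maximal_left_ideal_def using L max left_ideal_eq_UNIV_iff by blast
  with L show ?thesis by blast
qed

lemma left_ideal_left_multiples: "left_ideal {s * (a::'a::complex_banach_algebra_1) | s. True}"
  unfolding left_ideal_def
proof (intro conjI ballI allI)
  show "0 \<in> {s * a | s. True}" by (metis (mono_tags) mult_zero_left mem_Collect_eq)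
qed (auto simp flip: mult_scaleC_left distrib_right mult.assoc)

lemma left_ideal_add_left_multiples:
  fixes L :: "'a::complex_banach_algebra_1 set"
  assumes L: "left_ideal L" shows "left_ideal {l + s * r | l s. l \<in> L}"
  unfolding left_ideal_def
proof (intro conjI ballI allI)
  show "0 \<in> {l + s * r | l s. l \<in> L}"
    by (rule CollectI, rule exI[of _ 0], rule exI[of _ 0]) (simp add: left_ideal_zero[OF L])
next
  fix a b assume "a \<in> {l + s * r | l s. l \<in> L}" "b \<in> {l + s * r | l s. l \<in> L}"
  then obtain l1 s1 l2 s2 where "a = l1 + s1 * r" "b = l2 + s2 * r" "l1 \<in> L" "l2 \<in> L" by blast
  then show "a + b \<in> {l + s * r | l s. l \<in> L}"
    by (intro CollectI exI[of _ "l1 + l2"] exI[of _ "s1 + s2"]) (simp add: algebra_simps left_ideal_add[OF L])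
next
  fix c and a assume "a \<in> {l + s * r | l s. l \<in> L}"
  then obtain l s where "a = l + s * r" "l \<in> L" by blast
  then show "scaleC c a \<in> {l + s * r | l s. l \<in> L}"
    by (intro CollectI exI[of _ "scaleC c l"] exI[of _ "scaleC c s"])
       (simp add: scaleC_add_right mult_scaleC_left left_ideal_scaleC[OF L])
next
  fix t a assume "a \<in> {l + s * r | l s. l \<in> L}"
  then obtain l s where "a = l + s * r" "l \<in> L" by blast
  then show "t * a \<in> {l + s * r | l s. l \<in> L}"
    by (intro CollectI exI[of _ "t * l"] exI[of _ "t * s"])
       (simp add: distrib_left mult.assoc left_ideal_mult[OF L])
qed

lemma left_ideal_jacobson_radical: "left_ideal (jacobson_radical :: 'a::complex_banach_algebra_1 set)"
  unfolding jacobson_radical_def by (rule left_ideal_Inter) (auto simp: maximal_left_ideal_def)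

lemma closed_jacobson_radical: "closed (jacobson_radical :: 'a::complex_banach_algebra_1 set)"
  unfolding jacobson_radical_def by (rule closed_Inter) (auto intro: maximal_left_ideal_closed)

lemma mem_maximal_left_ideal_if_left_quasi_regular:
  fixes L :: "'a::complex_banach_algebra_1 set"
  assumes "maximal_left_ideal L" and H: "\<forall>b. \<exists>u. u * (1 - b * r) = 1"
  shows "r \<in> L"
proof (rule ccontr)
  assume "r \<notin> L"
  have L: "left_ideal L" "L \<noteq> UNIV"
    and max: "\<And>M. left_ideal M \<Longrightarrow> L \<subseteq> M \<Longrightarrow> M \<noteq> UNIV \<Longrightarrow> M = L"
    using assms(1) unfolding maximal_left_ideal_def by auto
  let ?M = "{l + s * r | l s. l \<in> L}"
  have "L \<subseteq> ?M"
  proof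
    fix l assume "l \<in> L"
    then show "l \<in> ?M" by (intro CollectI exI[of _ l] exI[of _ 0]) simp
  qed
  moreover have "r \<in> ?M"
    using left_ideal_zero[OF L(1)] by (intro CollectI exI[of _ 0] exI[of _ 1]) simp
  ultimately have "?M = UNIV"
    using max[OF left_ideal_add_left_multiples[OF L(1)]] \<open>r \<notin> L\<close> by blast
  then have "1 \<in> ?M" by simp
  then obtain l s where ls: "1 = l + s * r" "l \<in> L" by blast
  obtain u where "u * (1 - s * r) = 1" using H by blast
  moreover have "1 - s * r = l" using ls(1) by (simp add: algebra_simps)
  ultimately have "u * l = 1" by simp
  then show False using left_ideal_mult[OF L(1) ls(2), of u] left_ideal_eq_UNIV_iff[OF L(1)] L(2) by simp
qed

lemma mem_jacobson_radical_iff: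
  "(r::'a::complex_banach_algebra_1) \<in> jacobson_radical \<longleftrightarrow> (\<forall>b. \<exists>u. u * (1 - b * r) = 1)"
proof
  assume r: "r \<in> jacobson_radical"
  show "\<forall>b. \<exists>u. u * (1 - b * r) = 1"
  proof (rule ccontr)
    assume "\<not> ?thesis"
    then obtain b where "1 \<notin> {s * (1 - b * r) | s. True}" by auto
    then obtain L where L: "maximal_left_ideal L" "{s * (1 - b * r) | s. True} \<subseteq> L"
      using exists_maximal_left_ideal[OF left_ideal_left_multiples] by blast
    then have Ll: "left_ideal L" and "L \<noteq> UNIV" unfolding maximal_left_ideal_def by auto
    have "r \<in> L" using r L(1) unfolding jacobson_radical_def by blast
    moreover have "1 * (1 - b * r) \<in> L" using L(2) by blast
    ultimately have "1 * (1 - b * r) + b * r \<in> L" using Ll left_ideal_add left_ideal_mult by blast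
    with \<open>L \<noteq> UNIV\<close> Ll show False by (simp add: left_ideal_eq_UNIV_iff)
  qed
qed (auto simp: jacobson_radical_def mem_maximal_left_ideal_if_left_quasi_regular)

lemma invertible_el_one_minus_jacobson_radical:
  assumes r: "(r::'a::complex_banach_algebra_1) \<in> jacobson_radical"
  shows "invertible_el (1 - r)"
proof -
  obtain u where u: "u * (1 - r) = 1" using r mem_jacobson_radical_iff[of r] by (metis mult_1_left)
  then have "u = 1 - (- u) * r" by (simp add: algebra_simps)
  moreover obtain v where "v * (1 - (- u) * r) = 1" using r mem_jacobson_radical_iff by blast
  ultimately have "v * u = 1" by simp
  then have "1 - r = v" using u by (metis mult.assoc mult_1_left mult_1_right)
  with u \<open>v * u = 1\<close> show ?thesis by (metis invertible_elI)
qed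

lemma jacobson_radical_mult_left:
  "r \<in> jacobson_radical \<Longrightarrow> c * r \<in> (jacobson_radical :: 'a::complex_banach_algebra_1 set)"
  using left_ideal_mult[OF left_ideal_jacobson_radical] .

lemma jacobson_radical_mult_right:
  assumes r: "(r::'a::complex_banach_algebra_1) \<in> jacobson_radical"
  shows "r * c \<in> jacobson_radical"
  unfolding mem_jacobson_radical_iff
proof
  fix b
  have "invertible_el (1 - c * (b * r))"
    using invertible_el_one_minus_jacobson_radical jacobson_radical_mult_left[OF r, of "c * b"]
    by (simp add: mult.assoc)
  then have "invertible_el (1 - b * r * c)" by (rule invertible_el_one_minus_commute)
  then show "\<exists>u. u * (1 - b * (r * c)) = 1" unfolding invertible_el_def by (auto simp: mult.assoc)
qed

section \<open>Rickart's theorem\<close>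

lemma sum_roots_unity_power:
  assumes "0 < n" "j < n"
  shows "(\<Sum>z | z ^ n = 1. z ^ j) = (if j = 0 then of_nat n else (0::complex))"
proof (cases "j = 0")
  case True
  then show ?thesis using card_roots_unity_eq[OF assms(1)] by simp
next
  case False
  define f where "f k = cis (2 * pi * real k / real n)" for k
  have bij: "bij_betw f {..<n} {z. z ^ n = 1}" unfolding f_def by (rule Complex.bij_betw_roots_unity[OF assms(1)])
  have "f j \<noteq> f 0"
    using bij False assms(1,2) unfolding bij_betw_def inj_on_def by blast
  then have ne1: "f j \<noteq> 1" by (simp add: f_def)
  have pow_n: "f j ^ n = 1" using bij assms(2) unfolding bij_betw_def by auto
  have "(\<Sum>z | z ^ n = 1. z ^ j) = (\<Sum>k<n. f k ^ j)"
    by (rule sum.reindex_bij_betw[OF bij, symmetric])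
  also have "\<dots> = (\<Sum>k<n. f j ^ k)"
    by (intro sum.cong refl) (simp only: f_def Complex.DeMoivre, simp add: mult_ac)
  also have "\<dots> = 0" using ne1 pow_n by (simp add: geometric_sum)
  finally show ?thesis using False by simp
qed

lemma norm_root_unity: "z ^ n = 1 \<Longrightarrow> 0 < n \<Longrightarrow> cmod z = 1"
  using power_eq_1_iff[of z n] by simp

lemma inv_el_one_minus_power:
  fixes b :: "'a::complex_banach_algebra_1"
  assumes n: "0 < n" and inv: "\<And>\<omega>. \<omega> ^ n = 1 \<Longrightarrow> invertible_el (1 - scaleC \<omega> b)"
  shows "invertible_el (1 - b ^ n)"
    and "inv_el (1 - b ^ n) = scaleC (1 / of_nat n) (\<Sum>\<omega> | \<omega> ^ n = 1. inv_el (1 - scaleC \<omega> b))"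
proof -
  let ?U = "{\<omega>::complex. \<omega> ^ n = 1}"
  define P where "P \<omega> = (\<Sum>j<n. scaleC \<omega> b ^ j)" for \<omega>
  have "scaleC \<omega> b ^ n = b ^ n" if "\<omega> \<in> ?U" for \<omega>
    using that by (simp add: scaleC_power)
  then have geo: "(1 - scaleC \<omega> b) * P \<omega> = 1 - b ^ n" "P \<omega> * (1 - scaleC \<omega> b) = 1 - b ^ n"
    if "\<omega> \<in> ?U" for \<omega>
    using that one_minus_mult_geometric_sum[of "scaleC \<omega> b" n] by (simp_all add: P_def)
  have left: "(1 - b ^ n) * inv_el (1 - scaleC \<omega> b) = P \<omega>" if "\<omega> \<in> ?U" for \<omega>
  proof -
    have "(1 - b ^ n) * inv_el (1 - scaleC \<omega> b) = P \<omega> * ((1 - scaleC \<omega> b) * inv_el (1 - scaleC \<omega> b))"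
      by (simp add: geo(2)[OF that, symmetric] mult.assoc)
    then show ?thesis using inv that by (simp add: mult_inv_el)
  qed
  have right: "inv_el (1 - scaleC \<omega> b) * (1 - b ^ n) = P \<omega>" if "\<omega> \<in> ?U" for \<omega>
  proof -
    have "inv_el (1 - scaleC \<omega> b) * (1 - b ^ n) = (inv_el (1 - scaleC \<omega> b) * (1 - scaleC \<omega> b)) * P \<omega>"
      by (simp add: geo(1)[OF that, symmetric] mult.assoc)
    then show ?thesis using inv that by (simp add: inv_el_mult)
  qed
  have "(\<Sum>\<omega>\<in>?U. P \<omega>) = (\<Sum>j<n. scaleC (\<Sum>\<omega>\<in>?U. \<omega> ^ j) (b ^ j))"
    by (simp add: P_def scaleC_power sum.swap[of _ ?U] scaleC.scale_sum_left)
  also have "\<dots> = (\<Sum>j<n. if j = 0 then scaleC (of_nat n) 1 else 0)"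
    by (intro sum.cong refl) (simp add: sum_roots_unity_power[OF n])
  also have "\<dots> = scaleC (of_nat n) 1" using n by (simp add: sum.delta)
  finally have sumP: "(\<Sum>\<omega>\<in>?U. P \<omega>) = scaleC (of_nat n) 1" .
  let ?W = "scaleC (1 / of_nat n) (\<Sum>\<omega>\<in>?U. inv_el (1 - scaleC \<omega> b))"
  have "(1 - b ^ n) * (\<Sum>\<omega>\<in>?U. inv_el (1 - scaleC \<omega> b)) = scaleC (of_nat n) 1"
    unfolding sum_distrib_left sumP[symmetric] by (rule sum.cong[OF refl left])
  moreover have "(\<Sum>\<omega>\<in>?U. inv_el (1 - scaleC \<omega> b)) * (1 - b ^ n) = scaleC (of_nat n) 1"
    unfolding sum_distrib_right sumP[symmetric] by (rule sum.cong[OF refl right])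
  ultimately have "(1 - b ^ n) * ?W = 1" "?W * (1 - b ^ n) = 1"
    using n by (simp_all add: mult_scaleC_left mult_scaleC_right scaleC_scaleC)
  then show "invertible_el (1 - b ^ n)" "inv_el (1 - b ^ n) = ?W"
    by (simp_all add: invertible_elI inv_el_eqI)
qed

lemma norm_inv_el_one_minus_power_diff_le:
  fixes b c :: "'a::complex_banach_algebra_1"
  assumes n: "0 < n"
    and inv: "\<And>\<omega>. \<omega> ^ n = 1 \<Longrightarrow> invertible_el (1 - scaleC \<omega> b) \<and> invertible_el (1 - scaleC \<omega> c)"
    and close: "\<And>\<omega>. \<omega> ^ n = 1 \<Longrightarrow> norm (inv_el (1 - scaleC \<omega> b) - inv_el (1 - scaleC \<omega> c)) \<le> \<epsilon>"
  shows "norm (inv_el (1 - b ^ n) - inv_el (1 - c ^ n)) \<le> \<epsilon>"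
proof -
  let ?U = "{\<omega>::complex. \<omega> ^ n = 1}"
  have "inv_el (1 - b ^ n) - inv_el (1 - c ^ n) =
      scaleC (1 / of_nat n) (\<Sum>\<omega>\<in>?U. inv_el (1 - scaleC \<omega> b) - inv_el (1 - scaleC \<omega> c))"
    using inv by (simp add: inv_el_one_minus_power(2)[OF n] sum_subtractf scaleC.scale_right_diff_distrib)
  then have "norm (inv_el (1 - b ^ n) - inv_el (1 - c ^ n))
      = norm (\<Sum>\<omega>\<in>?U. inv_el (1 - scaleC \<omega> b) - inv_el (1 - scaleC \<omega> c)) / real n"
    by (simp add: norm_scaleC norm_divide)
  also have "\<dots> \<le> (\<Sum>\<omega>\<in>?U. \<epsilon>) / real n"
    by (intro divide_right_mono order.trans[OF norm_sum sum_mono] close) auto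
  also have "\<dots> = \<epsilon>" using n by (simp add: card_roots_unity_eq)
  finally show ?thesis .
qed

lemma norm_le_one_if_inv_el_close:
  fixes T U :: "'a::complex_banach_algebra_1"
  assumes T: "norm T \<le> 1/8" and U: "invertible_el (1 - U)"
    and close: "norm (inv_el (1 - U) - inv_el (1 - T)) \<le> 1/4"
  shows "norm U \<le> 1"
proof -
  have "norm (inv_el (1 - T) - 1) \<le> 1/4"
    using invertible_el_one_minus_small(2)[of T] T by simp
  then have small: "norm (1 - inv_el (1 - U)) \<le> 1/2"
    using norm_triangle_ineq[of "inv_el (1 - T) - inv_el (1 - U)" "1 - inv_el (1 - T)"] close
    by (simp add: norm_minus_commute)
  have "norm (inv_el (inv_el (1 - U)) - 1) \<le> 1"
    using invertible_el_one_minus_small(2)[OF small] small by simp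
  moreover have "inv_el (inv_el (1 - U)) = 1 - U"
    using U by (simp add: inv_el_eqI mult_inv_el inv_el_mult)
  ultimately show ?thesis by (simp add: norm_minus_commute)
qed

lemma power_mult_tendsto_zero_if_eventually_le_one:
  fixes s :: "nat \<Rightarrow> real"
  assumes "0 \<le> t" "t < u" "\<And>n. 0 \<le> s n" "eventually (\<lambda>n. u ^ n * s n \<le> 1) sequentially"
  shows "(\<lambda>n. t ^ n * s n) \<longlonglongrightarrow> 0"
proof (rule Lim_null_comparison)
  show "eventually (\<lambda>n. norm (t ^ n * s n) \<le> (t / u) ^ n) sequentially"
    using assms(4)
  proof (rule eventually_mono)
    fix n assume "u ^ n * s n \<le> 1"
    then have "(t / u) ^ n * (u ^ n * s n) \<le> (t / u) ^ n"
      using assms(1,2) by (simp add: mult_left_le)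
    then show "norm (t ^ n * s n) \<le> (t / u) ^ n"
      using assms(1-3) by (simp add: power_divide abs_mult)
  qed
  show "(\<lambda>n. (t / u) ^ n) \<longlonglongrightarrow> 0" using assms(1,2) by (intro LIMSEQ_power_zero) simp
qed

text \<open>Rickart's identity makes \<open>(1 - (t a)\<^sup>n)\<^sup>-\<^sup>1\<close> an average of resolvent values on the circle of
  radius \<open>t\<close>, so closeness of the resolvent at radii \<open>t\<close> and \<open>u\<close> holds for all powers at once.\<close>

lemma eventually_power_norm_le_one_if_resolvent_close:
  fixes a :: "'a::complex_banach_algebra_1"
  assumes inv: "\<And>\<mu>. invertible_el (1 - scaleC \<mu> a)"
    and close: "\<And>\<mu> \<mu>'. cmod \<mu> \<le> 2 \<Longrightarrow> cmod \<mu>' \<le> 2 \<Longrightarrow> dist \<mu>' \<mu> < \<delta> \<Longrightarrow>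
        dist (inv_el (1 - scaleC \<mu>' a)) (inv_el (1 - scaleC \<mu> a)) < 1/4"
    and t: "(\<lambda>n. t ^ n * norm (a ^ n)) \<longlonglongrightarrow> 0" "0 \<le> t"
    and u: "t \<le> u" "u \<le> 2" "u - t < \<delta>"
  shows "eventually (\<lambda>n. u ^ n * norm (a ^ n) \<le> 1) sequentially"
proof -
  have "eventually (\<lambda>n. t ^ n * norm (a ^ n) < 1/8) sequentially"
    using t(1) by (rule order_tendstoD(2)) simp
  then show ?thesis
    using eventually_gt_at_top[of 0]
  proof (eventually_elim)
    case (elim n)
    let ?b = "scaleC (complex_of_real t) a" and ?c = "scaleC (complex_of_real u) a"
    have inv_roots: "invertible_el (1 - scaleC \<omega> ?c) \<and> invertible_el (1 - scaleC \<omega> ?b)" for \<omega>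
      using inv by (simp add: scaleC_scaleC)
    have "norm (inv_el (1 - scaleC \<omega> ?c) - inv_el (1 - scaleC \<omega> ?b)) \<le> 1/4"
      if "\<omega> ^ n = 1" for \<omega>
    proof -
      have "cmod \<omega> = 1" using norm_root_unity that elim(2) by blast
      then have "cmod (\<omega> * of_real u) \<le> 2" "cmod (\<omega> * of_real t) \<le> 2"
        "dist (\<omega> * of_real u) (\<omega> * of_real t) < \<delta>"
        using t(2) u by (simp_all add: norm_mult dist_norm flip: right_diff_distrib of_real_diff)
      then show ?thesis
        using close by (fastforce simp: dist_norm scaleC_scaleC)
    qed
    then have "norm (inv_el (1 - ?c ^ n) - inv_el (1 - ?b ^ n)) \<le> 1/4"
      using elim(2) inv_roots by (intro norm_inv_el_one_minus_power_diff_le) auto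
    moreover have "invertible_el (1 - ?c ^ n)"
      using elim(2) inv_roots by (intro inv_el_one_minus_power(1)) auto
    moreover have "norm (?b ^ n) \<le> 1/8" using elim(1) t(2) by (simp add: norm_scaleC_power)
    ultimately have "norm (?c ^ n) \<le> 1" by (intro norm_le_one_if_inv_el_close)
    then show ?case using t(2) u(1) by (simp add: norm_scaleC_power)
  qed
qed

lemma norm_power_tendsto_zero_if_resolvent_invertible:
  fixes a :: "'a::complex_banach_algebra_1"
  assumes inv: "\<And>\<mu>. invertible_el (1 - scaleC \<mu> a)"
  shows "(\<lambda>n. norm (a ^ n)) \<longlonglongrightarrow> 0"
proof -
  define G where "G \<mu> = inv_el (1 - scaleC \<mu> a)" for \<mu>
  have "isCont G \<mu>" for \<mu>
    unfolding isCont_def G_def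
    by (intro tendsto_inv_el inv tendsto_diff tendsto_const
        bounded_linear.tendsto[OF bounded_linear_scaleC_left] tendsto_ident_at)
  then have "uniformly_continuous_on (cball 0 2) G"
    by (intro compact_uniformly_continuous continuous_at_imp_continuous_on) auto
  then obtain \<delta> where \<delta>: "\<delta> > 0"
    and close: "\<And>\<mu> \<mu>'. cmod \<mu> \<le> 2 \<Longrightarrow> cmod \<mu>' \<le> 2 \<Longrightarrow> dist \<mu>' \<mu> < \<delta> \<Longrightarrow> dist (G \<mu>') (G \<mu>) < 1/4"
    unfolding uniformly_continuous_on_def by (meson mem_cball_0 zero_less_divide_1_iff zero_less_numeral)
  define Z where "Z t \<longleftrightarrow> (\<lambda>n. t ^ n * norm (a ^ n)) \<longlonglongrightarrow> 0" for t :: real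
  define h where "h = min \<delta> 1 / 2"
  have h: "0 < h" "h \<le> 1/2" "3 * h / 2 < \<delta>" using \<delta> by (auto simp: h_def)
  have Z_min: "Z (min (real m * h) 1)" for m
  proof (induction m)
    case 0
    show ?case unfolding Z_def by (rule LIMSEQ_imp_Suc) simp
  next
    case (Suc m)
    let ?t = "min (real m * h) 1"
    have "min (real (Suc m) * h) 1 \<le> ?t + h" using h(1) by (auto simp: algebra_simps min_def)
    moreover have "eventually (\<lambda>n. (?t + 3 * h / 2) ^ n * norm (a ^ n) \<le> 1) sequentially"
      using Suc h close unfolding Z_def G_def
      by (intro eventually_power_norm_le_one_if_resolvent_close[OF inv]) auto
    ultimately show ?case
      unfolding Z_def using h
      by (intro power_mult_tendsto_zero_if_eventually_le_one[of _ "?t + 3 * h / 2"]) auto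
  qed
  obtain m :: nat where "1 / h \<le> real m" using real_arch_simple by blast
  then have "min (real m * h) 1 = 1" using h by (simp add: field_simps)
  then show ?thesis using Z_min[of m] by (simp add: Z_def)
qed

section \<open>Quasinilpotent elements and the radical\<close>

lemma power_mult_norm_power_tendsto_zero:
  fixes a :: "'a::complex_banach_algebra_1"
  assumes inv: "\<And>\<mu>. invertible_el (1 - scaleC \<mu> a)" and "0 \<le> K"
  shows "(\<lambda>n. K ^ n * norm (a ^ n)) \<longlonglongrightarrow> 0"
proof -
  have "(\<lambda>n. norm ((scaleC (of_real K) a) ^ n)) \<longlonglongrightarrow> 0"
    using inv by (intro norm_power_tendsto_zero_if_resolvent_invertible) (simp add: scaleC_scaleC)
  then show ?thesis using \<open>0 \<le> K\<close> by (simp add: norm_scaleC_power)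
qed

lemma not_invertible_el_if_resolvent_invertible:
  fixes a :: "'a::complex_banach_algebra_1"
  assumes inv: "\<And>\<mu>. invertible_el (1 - scaleC \<mu> a)"
  shows "\<not> invertible_el a"
proof
  assume a: "invertible_el a"
  have "1 \<le> norm (inv_el a) ^ n * norm (a ^ n)" for n
  proof -
    have "1 = norm (a ^ n * inv_el a ^ n)" by (simp add: power_mult_power_eq_one mult_inv_el[OF a])
    also have "\<dots> \<le> norm (a ^ n) * norm (inv_el a) ^ n"
      by (rule order_trans[OF norm_mult_ineq mult_left_mono[OF norm_power_ineq]]) simp
    finally show ?thesis by (simp add: mult.commute)
  qed
  moreover have "eventually (\<lambda>n. norm (inv_el a) ^ n * norm (a ^ n) < 1) sequentially"
    using power_mult_norm_power_tendsto_zero[OF inv, of "norm (inv_el a)"]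
    by (rule order_tendstoD(2)) simp_all
  ultimately show False by (auto dest: eventually_happens simp: not_less[symmetric])
qed

lemma quasinilpotents_iff:
  "(a::'a::complex_banach_algebra_1) \<in> quasinilpotents \<longleftrightarrow>
     \<not> invertible_el a \<and> (\<forall>\<mu>. invertible_el (1 - scaleC \<mu> a))"
proof -
  have shift: "scaleC z 1 - a = scaleC z (1 - scaleC (inverse z) a)" if "z \<noteq> 0" for z
    using that by (simp add: scaleC.scale_right_diff_distrib scaleC_scaleC)
  have "0 \<in> spectrum_el a \<longleftrightarrow> \<not> invertible_el a"
    by (simp add: spectrum_el_def invertible_el_minus_iff)
  moreover have "z \<notin> spectrum_el a \<longleftrightarrow> invertible_el (1 - scaleC (inverse z) a)" if "z \<noteq> 0" for z
    using that shift[OF that] by (simp add: spectrum_el_def invertible_el_scaleC_iff)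
  moreover have "invertible_el (1 - scaleC 0 a)" by (simp add: invertible_el_one)
  ultimately show ?thesis
    unfolding quasinilpotents_def by (auto, metis inverse_inverse_eq inverse_nonzero_iff_nonzero)
qed

lemma quasinilpotents_iff_resolvent:
  "(a::'a::complex_banach_algebra_1) \<in> quasinilpotents \<longleftrightarrow> (\<forall>\<mu>. invertible_el (1 - scaleC \<mu> a))"
  using not_invertible_el_if_resolvent_invertible quasinilpotents_iff by blast

lemma summable_power_mult_norm_power:
  fixes a :: "'a::complex_banach_algebra_1"
  assumes a: "a \<in> quasinilpotents" and K: "0 \<le> K"
  shows "summable (\<lambda>n. K ^ n * norm (a ^ n))"
proof (rule summable_comparison_test_ev)
  have "(\<lambda>n. (2 * K + 1) ^ n * norm (a ^ n)) \<longlonglongrightarrow> 0"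
    using a K by (intro power_mult_norm_power_tendsto_zero) (auto simp: quasinilpotents_iff_resolvent)
  then have "eventually (\<lambda>n. (2 * K + 1) ^ n * norm (a ^ n) < 1) sequentially"
    by (rule order_tendstoD(2)) simp
  then show "eventually (\<lambda>n. norm (K ^ n * norm (a ^ n)) \<le> (1/2) ^ n) sequentially"
  proof (rule eventually_mono)
    fix n assume less: "(2 * K + 1) ^ n * norm (a ^ n) < 1"
    have "norm (K ^ n * norm (a ^ n)) = (K / (2 * K + 1)) ^ n * ((2 * K + 1) ^ n * norm (a ^ n))"
      using K by (simp add: power_divide)
    also have "\<dots> \<le> (1/2) ^ n * 1"
      using less K by (intro mult_mono power_mono) (auto simp: field_simps)
    finally show "norm (K ^ n * norm (a ^ n)) \<le> (1/2) ^ n" by simp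
  qed
qed (simp add: summable_geometric)

lemma jacobson_radical_subset_quasinilpotents:
  "jacobson_radical \<subseteq> (quasinilpotents :: 'a::complex_banach_algebra_1 set)"
  unfolding subset_eq quasinilpotents_iff_resolvent
  using invertible_el_one_minus_jacobson_radical left_ideal_scaleC[OF left_ideal_jacobson_radical]
  by blast

lemma left_invertible_if_mult_minus_one_in_jacobson_radical:
  assumes "c * w - 1 \<in> (jacobson_radical :: 'a::complex_banach_algebra_1 set)"
  shows "\<exists>u. u * w = 1"
proof -
  have "invertible_el (1 - - (c * w - 1))"
    using assms by (intro invertible_el_one_minus_jacobson_radical left_ideal_minus[OF left_ideal_jacobson_radical])
  then have "inv_el (c * w) * (c * w) = 1" by (simp add: inv_el_mult)
  then show ?thesis by (metis mult.assoc)
qed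

lemma quasinilpotents_subset_jacobson_radical:
  assumes comm: "\<And>a b::'a::complex_banach_algebra_1. a * b - b * a \<in> jacobson_radical"
  shows "(quasinilpotents :: 'a set) \<subseteq> jacobson_radical"
proof
  fix a :: 'a assume a: "a \<in> quasinilpotents"
  have "\<exists>u. u * (1 - b * a) = 1" for b
  proof -
    define s where "s n = b ^ n * a ^ n" for n
    have le: "norm (s n) \<le> norm b ^ n * norm (a ^ n)" for n
      unfolding s_def by (rule order_trans[OF norm_mult_ineq mult_right_mono[OF norm_power_ineq]]) simp
    have "summable (\<lambda>n. norm (s n))"
      by (rule summable_comparison_test'[OF summable_power_mult_norm_power[OF a, of "norm b"]]) (simp_all add: le)
    then have partial: "(\<lambda>N. \<Sum>n<N. s n) \<longlonglongrightarrow> suminf s"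
      by (simp add: summable_LIMSEQ summable_norm_cancel)
    have increment: "s (Suc n) - s n * (b * a) \<in> jacobson_radical" for n
    proof -
      have "s (Suc n) - s n * (b * a) = b ^ n * ((b * a ^ Suc n - a ^ Suc n * b) + a ^ n * (a * b - b * a))"
        unfolding s_def by (simp add: algebra_simps power_Suc2 del: power_Suc)
      then show ?thesis
        by (simp add: comm jacobson_radical_mult_left left_ideal_add[OF left_ideal_jacobson_radical])
    qed
    have "(\<Sum>n<Suc N. s n) - 1 - (\<Sum>n<N. s n) * (b * a) = (\<Sum>n<N. s (Suc n) - s n * (b * a))" for N
      by (simp only: sum.lessThan_Suc_shift) (simp add: s_def sum_subtractf sum_distrib_right)
    then have "(\<Sum>n<Suc N. s n) - 1 - (\<Sum>n<N. s n) * (b * a) \<in> jacobson_radical" for N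
      using increment by (simp add: left_ideal_sum[OF left_ideal_jacobson_radical])
    moreover have "(\<lambda>N. (\<Sum>n<Suc N. s n) - 1 - (\<Sum>n<N. s n) * (b * a))
        \<longlonglongrightarrow> suminf s - 1 - suminf s * (b * a)"
      by (intro tendsto_diff tendsto_mult tendsto_const partial LIMSEQ_Suc[OF partial])
    ultimately have "suminf s - 1 - suminf s * (b * a) \<in> jacobson_radical"
      by (rule closed_sequentially[OF closed_jacobson_radical])
    then show ?thesis
      by (intro left_invertible_if_mult_minus_one_in_jacobson_radical[of "suminf s"])
         (simp add: algebra_simps)
  qed
  then show "a \<in> jacobson_radical" by (simp add: mem_jacobson_radical_iff)
qed

section \<open>The \<open>q\<close>-plane\<close>

context
  fixes x y :: "'a::complex_banach_algebra_1" and q :: complex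
  assumes yx: "y * x = scaleC q (x * y)"
begin

lemma power_mult_q_commute: "y ^ n * x = scaleC (q ^ n) (x * y ^ n)"
proof (induction n)
  case (Suc n)
  have "y ^ Suc n * x = y ^ n * (y * x)" by (simp add: power_Suc2 mult.assoc del: power_Suc)
  also have "\<dots> = scaleC q (y ^ n * x * y)" by (simp add: yx mult_scaleC_right mult.assoc)
  also have "\<dots> = scaleC (q ^ Suc n) (x * y ^ Suc n)"
    by (simp add: Suc mult_scaleC_left scaleC_scaleC mult.assoc power_Suc2 mult.commute del: power_Suc)
  finally show ?case .
qed simp

lemma power_mult_q: "(x * y) ^ n = scaleC (q ^ (\<Sum>i<n. i)) (x ^ n * y ^ n)"
proof (induction n)
  case (Suc n)
  have "(x * y) ^ Suc n = scaleC (q ^ (\<Sum>i<n. i)) (x ^ n * (y ^ n * x) * y)"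
    by (simp add: Suc power_Suc2 mult_scaleC_left mult.assoc del: power_Suc)
  also have "\<dots> = scaleC (q ^ (\<Sum>i<n. i) * q ^ n) (x ^ n * x * (y ^ n * y))"
    by (simp add: power_mult_q_commute mult_scaleC_left mult_scaleC_right scaleC_scaleC mult.assoc)
  also have "\<dots> = scaleC (q ^ (\<Sum>i<Suc n. i)) (x ^ Suc n * y ^ Suc n)"
    by (simp add: power_Suc2 power_add del: power_Suc)
  finally show ?case .
qed simp

lemma summable_norm_power_scaleC_mult:
  assumes q: "cmod q < 1"
  shows "summable (\<lambda>n. norm ((scaleC w (x * y)) ^ n))"
proof -
  define C where "C = cmod w * norm x * norm y"
  define f where "f n = C ^ n * cmod q ^ (\<Sum>i<n. i)" for n
  have f_nonneg: "f n \<ge> 0" for n by (simp add: f_def C_def)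
  have bound: "norm ((scaleC w (x * y)) ^ n) \<le> f n" for n
  proof -
    have "norm ((scaleC w (x * y)) ^ n) = cmod w ^ n * cmod q ^ (\<Sum>i<n. i) * norm (x ^ n * y ^ n)"
      by (simp add: norm_scaleC_power power_mult_q norm_scaleC norm_power)
    also have "\<dots> \<le> cmod w ^ n * cmod q ^ (\<Sum>i<n. i) * (norm x ^ n * norm y ^ n)"
      by (intro mult_left_mono order_trans[OF norm_mult_ineq mult_mono] norm_power_ineq) auto
    also have "\<dots> = f n" by (simp add: f_def C_def power_mult_distrib)
    finally show ?thesis .
  qed
  have "(\<lambda>n. C * cmod q ^ n) \<longlonglongrightarrow> C * 0"
    by (intro tendsto_mult tendsto_const LIMSEQ_power_zero) (simp add: q)
  then have "eventually (\<lambda>n. C * cmod q ^ n < 1/2) sequentially"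
    by (rule order_tendstoD(2)) simp
  then obtain N where N: "\<And>n. n \<ge> N \<Longrightarrow> C * cmod q ^ n < 1/2"
    unfolding eventually_sequentially by blast
  have "summable f"
  proof (rule summable_ratio_test[of "1/2" N])
    fix n assume "n \<ge> N"
    have "f (Suc n) = (C * cmod q ^ n) * f n" by (simp add: f_def power_add)
    also have "\<dots> \<le> 1/2 * f n" using N[OF \<open>n \<ge> N\<close>] f_nonneg[of n] by (intro mult_right_mono) auto
    finally show "norm (f (Suc n)) \<le> 1/2 * norm (f n)" using f_nonneg[of n] f_nonneg[of "Suc n"] by simp
  qed simp
  then show ?thesis by (rule summable_comparison_test[rotated]) (auto simp: bound)
qed

lemma mult_mem_quasinilpotents: "cmod q < 1 \<Longrightarrow> x * y \<in> quasinilpotents"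
  unfolding quasinilpotents_iff_resolvent
  using neumann_series(1)[OF summable_norm_power_scaleC_mult] by blast

lemma commutator_generator_mem_ideal_gen:
  assumes "a \<in> subalg_gen x y" and "g = x \<or> g = y"
  shows "a * g - g * a \<in> ideal_gen (subalg_gen x y) (x * y)"
proof -
  have "x * y - y * x = scaleC (1 - q) (x * y)" "y * x - x * y = scaleC (q - 1) (x * y)"
    by (simp_all add: yx scaleC.scale_left_diff_distrib)
  then have "x * y - y * x \<in> ideal_gen (subalg_gen x y) (x * y)"
    "y * x - x * y \<in> ideal_gen (subalg_gen x y) (x * y)"
    by (simp_all add: ideal_gen.scale ideal_gen.gen)
  then have generators: "x * g - g * x \<in> ideal_gen (subalg_gen x y) (x * y)"
    "y * g - g * y \<in> ideal_gen (subalg_gen x y) (x * y)"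
    using assms(2) by (auto simp: ideal_gen.zero)
  from assms(1) show ?thesis
  proof (induction rule: subalg_gen.induct)
    case (add a b)
    have "(a + b) * g - g * (a + b) = (a * g - g * a) + (b * g - g * b)" by (simp add: algebra_simps)
    then show ?case using add by (simp add: ideal_gen.add)
  next
    case (scale a c)
    have "scaleC c a * g - g * scaleC c a = scaleC c (a * g - g * a)"
      by (simp add: mult_scaleC_left mult_scaleC_right scaleC.scale_right_diff_distrib)
    then show ?case using scale by (simp add: ideal_gen.scale)
  next
    case (mult a b)
    have "a * b * g - g * (a * b) = a * (b * g - g * b) + (a * g - g * a) * b" by (simp add: algebra_simps)
    then show ?case using mult by (simp add: ideal_gen.add ideal_gen.mult_left ideal_gen.mult_right)
  qed (simp_all add: generators ideal_gen.zero)
qed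

lemma commutator_mem_ideal_gen:
  assumes a: "a \<in> subalg_gen x y" and "b \<in> subalg_gen x y"
  shows "a * b - b * a \<in> ideal_gen (subalg_gen x y) (x * y)"
  using assms(2)
proof (induction rule: subalg_gen.induct)
  case (add b c)
  have "a * (b + c) - (b + c) * a = (a * b - b * a) + (a * c - c * a)" by (simp add: algebra_simps)
  then show ?case using add by (simp add: ideal_gen.add)
next
  case (scale b c)
  have "a * scaleC c b - scaleC c b * a = scaleC c (a * b - b * a)"
    by (simp add: mult_scaleC_left mult_scaleC_right scaleC.scale_right_diff_distrib)
  then show ?case using scale by (simp add: ideal_gen.scale)
next
  case (mult b c)
  have "a * (b * c) - b * c * a = (a * b - b * a) * c + b * (a * c - c * a)" by (simp add: algebra_simps)
  then show ?case using mult by (simp add: ideal_gen.add ideal_gen.mult_left ideal_gen.mult_right)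
qed (simp_all add: ideal_gen.zero commutator_generator_mem_ideal_gen[OF a])

end

lemma ideal_gen_subset_jacobson_radical:
  assumes "(z::'a::complex_banach_algebra_1) \<in> jacobson_radical"
  shows "ideal_gen S z \<subseteq> jacobson_radical"
proof
  fix a assume "a \<in> ideal_gen S z"
  then show "a \<in> jacobson_radical"
  proof (induction rule: ideal_gen.induct)
    case (mult_left s a)
    then show ?case by (simp add: jacobson_radical_mult_left)
  next
    case (mult_right s a)
    then show ?case by (simp add: jacobson_radical_mult_right)
  qed (use assms in \<open>simp_all add: left_ideal_zero[OF left_ideal_jacobson_radical]
          left_ideal_add[OF left_ideal_jacobson_radical] left_ideal_scaleC[OF left_ideal_jacobson_radical]\<close>)
qed

lemma commutator_mem_closed_if_dense:
  fixes S C :: "'a::real_normed_algebra set"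
  assumes "closure S = UNIV" "closed C" "\<And>a b. a \<in> S \<Longrightarrow> b \<in> S \<Longrightarrow> a * b - b * a \<in> C"
  shows "a * b - b * a \<in> C"
proof -
  have "(\<lambda>b. a * b - b * a) ` closure S \<subseteq> C" if "a \<in> S" for a
    using assms(2,3) that by (intro image_closure_subset continuous_intros) auto
  then have "(\<lambda>a. a * b - b * a) ` closure S \<subseteq> C"
    using assms(1,2) by (intro image_closure_subset continuous_intros) auto
  with assms(1) show ?thesis by blast
qed

theorem proposition3p1:
  fixes q :: complex and x y :: "'a::complex_banach_algebra_1"
  assumes "0 < cmod q" and "cmod q < 1"
    and "banach_q_plane q x y"
  shows "(I_xy x y \<subseteq> jacobson_radical \<longleftrightarrow> jacobson_radical = (quasinilpotents :: 'a set))
    \<and> (jacobson_radical = (quasinilpotents :: 'a set) \<longleftrightarrow>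
         (\<forall>a b::'a. a * b - b * a \<in> jacobson_radical))"
proof -
  have xy: "x * y = scaleC (inverse q) (y * x)" and dense: "closure (subalg_gen x y) = UNIV"
    using assms(3) unfolding banach_q_plane_def by auto
  have yx: "y * x = scaleC q (x * y)"
    using assms(1) by (simp add: xy scaleC_scaleC)
  have ii_i: "I_xy x y \<subseteq> jacobson_radical" if "jacobson_radical = (quasinilpotents :: 'a set)"
  proof -
    have "x * y \<in> jacobson_radical" using that mult_mem_quasinilpotents[OF yx assms(2)] by simp
    then show ?thesis
      unfolding I_xy_def by (rule closure_minimal[OF ideal_gen_subset_jacobson_radical closed_jacobson_radical])
  qed
  have i_iii: "a * b - b * a \<in> jacobson_radical" if "I_xy x y \<subseteq> jacobson_radical" for a b :: 'a
  proof (rule commutator_mem_closed_if_dense[OF dense closed_jacobson_radical])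
    fix a b assume "a \<in> subalg_gen x y" "b \<in> subalg_gen x y"
    then show "a * b - b * a \<in> jacobson_radical"
      using that commutator_mem_ideal_gen[OF yx] closure_subset unfolding I_xy_def by blast
  qed
  have iii_ii: "jacobson_radical = (quasinilpotents :: 'a set)"
    if "\<forall>a b::'a. a * b - b * a \<in> jacobson_radical"
    using that quasinilpotents_subset_jacobson_radical jacobson_radical_subset_quasinilpotents by blast
  show ?thesis using ii_i i_iii iii_ii by blast
qed

end
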